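(* Assume $S\times M\neq\emptyset$, let $(x,\lambda):[t_0,+\infty[\ \to X\times Y$ be a solution of (AHT), for each $t\ge t_0$ let $(x_t,\lambda_t)$ be the unique zero of $T_t=T+\varepsilon(t)\mathrm{id}$, suppose there exists $t_+\ge t_0$ such that $\varepsilon^2(t)+\dot\varepsilon(t)\ge0$ and $2\varepsilon(t)\dot\varepsilon(t)+\ddot\varepsilon(t)\le0$ for all $t\ge t_+$, and suppose there exists $\alpha>0$ with $\|T(x,\lambda)-T(\xi,\eta)\|^2\ge\alpha\|(x,\lambda)-(\xi,\eta)\|^2$ for all $(x,\lambda),(\xi,\eta)\in X\times Y$. Then \[ \|(x(t),\lambda(t))-(x_t,\lambda_t)\|^2=\mathcal{O}\big(e^{-2\rho(t)}+\varepsilon^2(t)\big)\quad\text{as } t\to+\infty. \]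
   Context: $X,Y$ are real Hilbert spaces; $X\times Y$ carries the product inner product and norm $\|\cdot\|$. Standing assumptions: $f:X\to\mathbb{R}$ is convex and continuously differentiable with $\nabla f$ Lipschitz continuous on bounded subsets of $X$; $A:X\to Y$ is linear and continuous with adjoint $A^*$; $b\in Y$; $\varepsilon:[t_0,+\infty[\ \to\ ]0,+\infty[$ ($t_0\ge0$) is twice continuously differentiable with $\lim_{t\to+\infty}\varepsilon(t)=0$. $L(x,\lambda)=f(x)+\langle\lambda,Ax-b\rangle_Y$ and $T(x,\lambda)=(\nabla f(x)+A^*\lambda,\ b-Ax)$. $S$ is the set of optimal solutions of $\min\{f(x):Ax=b\}$, $M$ the set of Lagrange multipliers; $S\times M$ is the set of saddle points of $L$, equal to the zero set of $T$. $T_t=T+\varepsilon(t)\mathrm{id}$ has a unique zero $(x_t,\lambda_t)$. $\rho(t)=\int_{t_0}^t\varepsilon(\tau)\,d\tau$. (AHT) is the system $\dot x+\nabla f(x)+A^*\lambda+\varepsilon(t)x=0$, $\dot\lambda+b-Ax+\varepsilon(t)\lambda=0$; a solution is a continuously differentiable $(x,\lambda):[t_0,+\infty[\ \to X\times Y$ satisfying it on $[t_0,+\infty[$ (existence and uniqueness for every initial datum is assumed). *)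

theory Defs
  imports "HOL-Analysis.Analysis" "HOL-Library.Landau_Symbols"
begin

definition opT :: "('a::real_inner \<Rightarrow> 'a) \<Rightarrow> ('a \<Rightarrow> 'b::real_inner) \<Rightarrow> ('b \<Rightarrow> 'a) \<Rightarrow> 'b
      \<Rightarrow> 'a \<times> 'b \<Rightarrow> 'a \<times> 'b" where
  "opT gf A Astar b z = (gf (fst z) + Astar (snd z), b - A (fst z))"

definition opt_sol :: "('a \<Rightarrow> real) \<Rightarrow> ('a \<Rightarrow> 'b) \<Rightarrow> 'b \<Rightarrow> 'a set" where
  "opt_sol f A b = {x. A x = b \<and> (\<forall>y. A y = b \<longrightarrow> f x \<le> f y)}"

definition lagrange_mult :: "('a \<Rightarrow> real) \<Rightarrow> ('a::real_inner \<Rightarrow> 'a) \<Rightarrow> ('a \<Rightarrow> 'b) \<Rightarrow> ('b \<Rightarrow> 'a) \<Rightarrow> 'b \<Rightarrow> 'b set" where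
  "lagrange_mult f gf A Astar b = {l. \<exists>x\<in>opt_sol f A b. gf x + Astar l = 0}"

end

theory Submission
  imports Defs
begin

text \<open>
  Write z = (x, \<lambda>), so that z' = - (T z + \<epsilon> z), and let \<rho> be the primitive of \<epsilon>.
  Monotonicity of T and the decrease of \<epsilon>^2 + \<epsilon>' make
  exp(2\<rho>) (|z'|^2 + \<epsilon>' |z|^2) nonincreasing, hence |z'|^2 \<le> K exp(-2\<rho>) + \<epsilon>^2 |z|^2.
  As z' need not be differentiable, this monotonicity is first proved for the analogous expression built
  from the increments z(t + h) - z(t), which is differentiable in t, and then h tends to 0.
  Strong monotonicity gives sqrt \<alpha> |z - z_t| \<le> |T z - T z_t| = |z' + \<epsilon> (z - z_t)|, and the
  regularized zeros z_t are bounded by the norm of any zero of T. Once \<epsilon> \<le> sqrt \<alpha> / 4, these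
  estimates combine to |z - z_t|^2 \<le> C (exp(-2\<rho>) + \<epsilon>^2).
\<close>

definition monotone_operator :: "('a::real_inner \<Rightarrow> 'a) \<Rightarrow> bool" where
  "monotone_operator T \<longleftrightarrow> (\<forall>u v. 0 \<le> (T u - T v) \<bullet> (u - v))"

lemma convex_on_gradient_inequality:
  fixes f :: "'a::real_inner \<Rightarrow> real"
  assumes convex: "convex_on UNIV f"
    and grad: "\<And>z. (f has_derivative (\<lambda>h. gf z \<bullet> h)) (at z)"
  shows "f x + gf x \<bullet> (y - x) \<le> f y"
proof -
  define \<phi> where "\<phi> r = f (x + r *\<^sub>R (y - x))" for r :: real
  have "convex_on UNIV \<phi>"
  proof (rule convex_onI)
    fix t r s :: real
    assume "0 < t" "t < 1"
    have "x + ((1 - t) * r + t * s) *\<^sub>R (y - x)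
        = (1 - t) *\<^sub>R (x + r *\<^sub>R (y - x)) + t *\<^sub>R (x + s *\<^sub>R (y - x))"
      by (simp add: algebra_simps)
    then show "\<phi> ((1 - t) *\<^sub>R r + t *\<^sub>R s) \<le> (1 - t) * \<phi> r + t * \<phi> s"
      unfolding \<phi>_def using convex_onD[OF convex, of t] \<open>0 < t\<close> \<open>t < 1\<close> by simp
  qed simp
  moreover have "(\<phi> has_real_derivative gf x \<bullet> (y - x)) (at 0)"
    unfolding \<phi>_def has_field_derivative_def
    by (rule has_derivative_compose[of "\<lambda>r. x + r *\<^sub>R (y - x)", OF _ grad, THEN has_derivative_eq_rhs])
       (auto intro!: derivative_eq_intros)
  ultimately have "gf x \<bullet> (y - x) * (1 - 0) \<le> \<phi> 1 - \<phi> 0"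
    by (intro convex_on_imp_above_tangent[where A = UNIV]) auto
  then show ?thesis
    unfolding \<phi>_def by simp
qed

lemma convex_on_gradient_monotone:
  fixes f :: "'a::real_inner \<Rightarrow> real"
  assumes "convex_on UNIV f" and "\<And>z. (f has_derivative (\<lambda>h. gf z \<bullet> h)) (at z)"
  shows "monotone_operator gf"
  unfolding monotone_operator_def
proof (intro allI)
  fix u v
  show "0 \<le> (gf u - gf v) \<bullet> (u - v)"
    using convex_on_gradient_inequality[OF assms, of u v] convex_on_gradient_inequality[OF assms, of v u]
    by (simp add: inner_diff_left inner_diff_right)
qed

lemma monotone_operator_opT:
  assumes gf: "monotone_operator gf" and "linear A" and adjoint: "\<And>u v. A u \<bullet> v = u \<bullet> Astar v"
  shows "monotone_operator (opT gf A Astar b)"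
  unfolding monotone_operator_def
proof (intro allI)
  fix z w :: "'a \<times> 'b"
  obtain x l x' l' where zw: "z = (x, l)" "w = (x', l')"
    by fastforce
  have "A x - A x' = A (x - x')"
    by (simp add: linear_diff[OF \<open>linear A\<close>])
  then have "(Astar l - Astar l') \<bullet> (x - x') = (A x - A x') \<bullet> (l - l')"
    using adjoint[of "x - x'" l] adjoint[of "x - x'" l'] by (simp add: inner_diff_left inner_diff_right inner_commute)
  then have "(opT gf A Astar b z - opT gf A Astar b w) \<bullet> (z - w) = (gf x - gf x') \<bullet> (x - x')"
    unfolding zw opT_def by (simp add: inner_diff_left inner_add_left)
  then show "0 \<le> (opT gf A Astar b z - opT gf A Astar b w) \<bullet> (z - w)"
    using gf unfolding monotone_operator_def by simp
qed

lemma opT_has_zero: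
  assumes "opt_sol f A b \<times> lagrange_mult f gf A Astar b \<noteq> {}"
  obtains w where "opT gf A Astar b w = 0"
proof -
  obtain l where "l \<in> lagrange_mult f gf A Astar b"
    using assms by blast
  then obtain x where "A x = b" "gf x + Astar l = 0"
    unfolding lagrange_mult_def opt_sol_def by blast
  then have "opT gf A Astar b (x, l) = 0"
    by (simp add: opT_def zero_prod_def)
  then show thesis
    using that by blast
qed

lemma monotone_operator_regularized_zero_norm_le:
  assumes "monotone_operator T" "T w = 0" "T y + e *\<^sub>R y = 0" "0 < e"
  shows "norm y \<le> norm w"
proof -
  have "T y = - (e *\<^sub>R y)"
    using assms(3) by (simp add: eq_neg_iff_add_eq_0)
  moreover have "0 \<le> (T y - T w) \<bullet> (y - w)"
    using assms(1) unfolding monotone_operator_def by blast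
  ultimately have "0 \<le> - e * (y \<bullet> (y - w))"
    using assms(2) by simp
  then have "y \<bullet> (y - w) \<le> 0"
    using \<open>0 < e\<close> by (simp add: mult_le_0_iff)
  then have "(norm y)\<^sup>2 \<le> y \<bullet> w"
    by (simp add: inner_diff_right power2_norm_eq_inner)
  also have "\<dots> \<le> norm y * norm w"
    by (rule norm_cauchy_schwarz)
  finally have "norm y * norm y \<le> norm y * norm w"
    by (simp add: power2_eq_square)
  then show ?thesis
    using mult_le_cancel_left_pos[of "norm y" "norm y" "norm w"] by (cases "norm y = 0") auto
qed

lemma strongly_monotone_regularized_zero_dist:
  assumes strong: "\<And>u v. \<alpha> * (norm (u - v))\<^sup>2 \<le> (norm (T u - T v))\<^sup>2"
    and "0 \<le> \<alpha>" "T y + e *\<^sub>R y = 0" "0 \<le> e"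
  shows "sqrt \<alpha> * norm (u - y) \<le> norm (T u + e *\<^sub>R u) + e * norm (u - y)"
proof -
  have "sqrt \<alpha> * norm (u - y) \<le> norm (T u - T y)"
    using real_sqrt_le_mono[OF strong[of u y]] \<open>0 \<le> \<alpha>\<close> by (simp add: real_sqrt_mult)
  also have "T u - T y = (T u + e *\<^sub>R u) - e *\<^sub>R (u - y)"
    using assms(3) by (simp add: algebra_simps eq_neg_iff_add_eq_0)
  also have "norm \<dots> \<le> norm (T u + e *\<^sub>R u) + e * norm (u - y)"
    using norm_triangle_ineq4[of "T u + e *\<^sub>R u" "e *\<^sub>R (u - y)"] \<open>0 \<le> e\<close> by simp
  finally show ?thesis .
qed

lemma at_within_atLeast: "a < s \<Longrightarrow> at s within {a..} = at (s::real)"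
  by (rule at_within_interior) (simp add: interior_Ici[of "a - 1"])

lemma DERIV_nonpos_imp_antimono_greaterThan:
  fixes g :: "real \<Rightarrow> real"
  assumes deriv: "\<And>s. a < s \<Longrightarrow> \<exists>D. (g has_real_derivative D) (at s) \<and> D \<le> 0"
    and "a < u" "u \<le> v"
  shows "g v \<le> g u"
proof (rule DERIV_nonpos_imp_decreasing_open[OF \<open>u \<le> v\<close>])
  show "\<exists>D. DERIV g s :> D \<and> D \<le> 0" if "u < s" "s < v" for s
    using deriv that \<open>a < u\<close> by simp
  show "continuous_on {u..v} g"
  proof (intro continuous_at_imp_continuous_on ballI)
    fix s
    assume "s \<in> {u..v}"
    then have "a < s"
      using \<open>a < u\<close> by auto
    then show "isCont g s"
      using deriv DERIV_isCont by blast
  qed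
qed

lemma has_real_derivative_norm_squared:
  fixes f :: "real \<Rightarrow> 'a::real_inner"
  assumes "(f has_vector_derivative f') (at s)"
  shows "((\<lambda>s. (norm (f s))\<^sup>2) has_real_derivative 2 * (f s \<bullet> f')) (at s)"
proof -
  have f: "(f has_derivative (\<lambda>h. h *\<^sub>R f')) (at s)"
    using assms by (simp add: has_vector_derivative_def)
  have "((\<lambda>s. f s \<bullet> f s) has_derivative (\<lambda>h. f s \<bullet> (h *\<^sub>R f') + (h *\<^sub>R f') \<bullet> f s)) (at s)"
    by (rule has_derivative_inner[OF f f])
  moreover have "(\<lambda>h. f s \<bullet> (h *\<^sub>R f') + (h *\<^sub>R f') \<bullet> f s) = (*) (2 * (f s \<bullet> f'))"
    by (auto simp: fun_eq_iff inner_commute algebra_simps)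
  ultimately show ?thesis
    unfolding has_field_derivative_def power2_norm_eq_inner by simp
qed

lemma integral_atLeast_has_real_derivative:
  fixes g :: "real \<Rightarrow> real"
  assumes "continuous_on {a..} g" "a < s"
  shows "((\<lambda>u. integral {a..u} g) has_real_derivative g s) (at s)"
proof -
  have "((\<lambda>u. integral {a..u} g) has_real_derivative g s) (at s within {a..s + 1})"
    using assms by (intro integral_has_real_derivative continuous_on_subset[OF assms(1)]) auto
  moreover have "at s within {a..s + 1} = at s"
    using assms by (intro at_within_interior) auto
  ultimately show ?thesis
    by simp
qed

lemma has_vector_derivative_difference_quotient:
  fixes z :: "real \<Rightarrow> 'a::real_normed_vector"
  assumes "(z has_vector_derivative v) (at s)"
  shows "((\<lambda>h. (z (s + h) - z s) /\<^sub>R h) \<longlongrightarrow> v) (at 0)"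
proof -
  have "((\<lambda>h. norm (z (s + h) - z s - h *\<^sub>R v) / norm h) \<longlongrightarrow> 0) (at 0)"
    using assms by (simp add: has_vector_derivative_def has_derivative_at)
  moreover have "\<forall>\<^sub>F h in at 0. norm (z (s + h) - z s - h *\<^sub>R v) / norm h = norm ((z (s + h) - z s) /\<^sub>R h - v)"
    unfolding eventually_at_filter
  proof (intro always_eventually allI impI)
    fix h :: real
    assume "h \<noteq> 0"
    then have "(z (s + h) - z s) /\<^sub>R h - v = (z (s + h) - z s - h *\<^sub>R v) /\<^sub>R h"
      by (simp add: scaleR_diff_right)
    then show "norm (z (s + h) - z s - h *\<^sub>R v) / norm h = norm ((z (s + h) - z s) /\<^sub>R h - v)"
      by (simp add: divide_inverse mult.commute)
  qed
  ultimately have "((\<lambda>h. norm ((z (s + h) - z s) /\<^sub>R h - v)) \<longlongrightarrow> 0) (at 0)"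
    by (rule Lim_transform_eventually)
  then show ?thesis
    by (simp add: tendsto_norm_zero_iff LIM_zero_iff)
qed

lemma square_plus_derivative_antimono:
  fixes e e' e'' :: "real \<Rightarrow> real"
  assumes "\<And>s. a < s \<Longrightarrow> (e has_real_derivative e' s) (at s)"
    and "\<And>s. a < s \<Longrightarrow> (e' has_real_derivative e'' s) (at s)"
    and "\<And>s. a < s \<Longrightarrow> 2 * e s * e' s + e'' s \<le> 0"
    and "a < u" "u \<le> v"
  shows "(e v)\<^sup>2 + e' v \<le> (e u)\<^sup>2 + e' u"
proof (rule DERIV_nonpos_imp_antimono_greaterThan[OF _ \<open>a < u\<close> \<open>u \<le> v\<close>])
  fix s
  assume "a < s"
  then have "((\<lambda>s. (e s)\<^sup>2 + e' s) has_real_derivative 2 * e s * e' s + e'' s) (at s)"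
    using assms(1,2) by (auto intro!: derivative_eq_intros)
  then show "\<exists>D. ((\<lambda>s. (e s)\<^sup>2 + e' s) has_real_derivative D) (at s) \<and> D \<le> 0"
    using assms(3) \<open>a < s\<close> by blast
qed

lemma regularized_increment_identity:
  fixes z1 z0 T1 T0 :: "'a::real_inner"
  shows "(e1 + e0) * ((norm (z1 - z0))\<^sup>2 + (e1 - e0) * G)
      + 2 * ((z1 - z0) \<bullet> (- (T1 + e1 *\<^sub>R z1) - - (T0 + e0 *\<^sub>R z0)))
      + (d1 - d0) * G + (e1 - e0) * ((norm z1)\<^sup>2 - (norm z0)\<^sup>2)
    = G * ((e1\<^sup>2 + d1) - (e0\<^sup>2 + d0)) - 2 * ((T1 - T0) \<bullet> (z1 - z0))"
  unfolding power2_norm_eq_inner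
  by (simp add: inner_diff_left inner_diff_right inner_add_right inner_commute algebra_simps power2_eq_square)

lemma error_bound_from_velocity_bound:
  fixes a \<epsilon> e v n R K q :: real
  assumes "0 < a" "0 \<le> \<epsilon>" "\<epsilon> \<le> a / 4" "0 \<le> e" "0 \<le> n" "0 \<le> R" "0 \<le> K" "0 \<le> q"
    and coercive: "a * e \<le> v + \<epsilon> * e"
    and velocity: "v\<^sup>2 \<le> K * q + \<epsilon>\<^sup>2 * n\<^sup>2"
    and triangle: "n \<le> R + e"
  shows "e\<^sup>2 \<le> 8 / a\<^sup>2 * max K (R\<^sup>2) * (q + \<epsilon>\<^sup>2)"
proof -
  have "K * q = (sqrt K * sqrt q)\<^sup>2" "\<epsilon>\<^sup>2 * n\<^sup>2 = (\<epsilon> * n)\<^sup>2"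
    using assms by (simp_all add: power_mult_distrib)
  moreover have "0 \<le> 2 * (sqrt K * sqrt q) * (\<epsilon> * n)"
    using assms by simp
  ultimately have "v\<^sup>2 \<le> (sqrt K * sqrt q + \<epsilon> * n)\<^sup>2"
    using velocity unfolding power2_sum by linarith
  then have "v \<le> sqrt K * sqrt q + \<epsilon> * n"
    by (rule power2_le_imp_le) (use assms in simp)
  then have "a * e \<le> sqrt K * sqrt q + \<epsilon> * R + 2 * (\<epsilon> * e)"
    using coercive mult_left_mono[OF triangle \<open>0 \<le> \<epsilon>\<close>] by (simp add: algebra_simps)
  moreover have "\<epsilon> * e \<le> a / 4 * e"
    using assms by (intro mult_right_mono) auto
  ultimately have "e \<le> 2 / a * (sqrt K * sqrt q + R * \<epsilon>)"
    using \<open>0 < a\<close> by (simp add: field_simps)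
  then have "e\<^sup>2 \<le> (2 / a * (sqrt K * sqrt q + R * \<epsilon>))\<^sup>2"
    using \<open>0 \<le> e\<close> by (rule power_mono)
  also have "\<dots> = 4 / a\<^sup>2 * (sqrt K * sqrt q + R * \<epsilon>)\<^sup>2"
    by (simp only: power_mult_distrib power_divide) simp
  finally have "e\<^sup>2 \<le> 4 / a\<^sup>2 * (sqrt K * sqrt q + R * \<epsilon>)\<^sup>2" .
  moreover have "(sqrt K * sqrt q + R * \<epsilon>)\<^sup>2 \<le> 2 * (K * q + R\<^sup>2 * \<epsilon>\<^sup>2)"
    using assms sum_squares_bound[of "sqrt K * sqrt q" "R * \<epsilon>"]
    by (simp add: power2_sum power_mult_distrib)
  moreover have "K * q + R\<^sup>2 * \<epsilon>\<^sup>2 \<le> max K (R\<^sup>2) * (q + \<epsilon>\<^sup>2)"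
    using assms by (simp add: distrib_left mult_right_mono add_mono)
  ultimately have "e\<^sup>2 \<le> 4 / a\<^sup>2 * (2 * (max K (R\<^sup>2) * (q + \<epsilon>\<^sup>2)))"
    by (smt (verit) mult_left_mono zero_le_divide_iff zero_le_power2)
  then show ?thesis
    by simp
qed

locale regularized_monotone_flow =
  fixes T :: "'a::real_inner \<Rightarrow> 'a"
    and eps eps' :: "real \<Rightarrow> real"
    and t0 :: real
    and z :: "real \<Rightarrow> 'a"
  assumes T_monotone: "monotone_operator T"
    and eps_pos: "\<And>t. t0 \<le> t \<Longrightarrow> 0 < eps t"
    and eps_deriv: "\<And>t. t0 \<le> t \<Longrightarrow> (eps has_real_derivative eps' t) (at t within {t0..})"
    and flow: "\<And>t. t0 \<le> t \<Longrightarrow>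
      (z has_vector_derivative - (T (z t) + eps t *\<^sub>R z t)) (at t within {t0..})"
begin

definition velocity :: "real \<Rightarrow> 'a" where
  "velocity t = - (T (z t) + eps t *\<^sub>R z t)"

definition rho :: "real \<Rightarrow> real" where
  "rho t = integral {t0..t} eps"

definition energy :: "real \<Rightarrow> real" where
  "energy t = integral {t0..t} (\<lambda>r. (norm (z r))\<^sup>2)"

definition lyapunov :: "real \<Rightarrow> real" where
  "lyapunov t = exp (2 * rho t) * ((norm (velocity t))\<^sup>2 + eps' t * (norm (z t))\<^sup>2)"

definition increment_functional :: "real \<Rightarrow> real \<Rightarrow> real" where
  "increment_functional h t = exp (rho (t + h) + rho t)
     * ((norm (z (t + h) - z t))\<^sup>2 + (eps (t + h) - eps t) * (energy (t + h) - energy t))"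

lemma z_has_vector_derivative: "t0 < t \<Longrightarrow> (z has_vector_derivative velocity t) (at t)"
  using flow[of t] by (simp add: velocity_def at_within_atLeast)

lemma eps_has_real_derivative: "t0 < t \<Longrightarrow> (eps has_real_derivative eps' t) (at t)"
  using eps_deriv[of t] by (simp add: at_within_atLeast)

lemma rho_has_real_derivative: "t0 < t \<Longrightarrow> (rho has_real_derivative eps t) (at t)"
  unfolding rho_def
  by (rule integral_atLeast_has_real_derivative) (use DERIV_continuous_on[OF eps_deriv] in auto)

lemma energy_has_real_derivative: "t0 < t \<Longrightarrow> (energy has_real_derivative (norm (z t))\<^sup>2) (at t)"
proof -
  have "continuous_on {t0..} z"
    unfolding continuous_on_eq_continuous_within
    using flow has_vector_derivative_continuous by fastforce
  then show "t0 < t \<Longrightarrow> ?thesis"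
    unfolding energy_def by (intro integral_atLeast_has_real_derivative continuous_intros)
qed

lemma energy_mono:
  assumes "t0 < u" "u \<le> v"
  shows "energy u \<le> energy v"
proof -
  have "- energy v \<le> - energy u"
    by (rule DERIV_nonpos_imp_antimono_greaterThan[OF _ assms])
       (auto intro!: derivative_eq_intros energy_has_real_derivative)
  then show ?thesis
    by simp
qed

lemma increment_functional_has_real_derivative:
  assumes "t0 < s" "t0 < s + h"
  shows "(increment_functional h has_real_derivative exp (rho (s + h) + rho s)
      * ((energy (s + h) - energy s) * ((eps (s + h))\<^sup>2 + eps' (s + h) - ((eps s)\<^sup>2 + eps' s))
        - 2 * ((T (z (s + h)) - T (z s)) \<bullet> (z (s + h) - z s)))) (at s)"
proof -
  define E where "E = exp (rho (s + h) + rho s)"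
  define G where "G = energy (s + h) - energy s"
  define L where "L = (eps (s + h) + eps s) * ((norm (z (s + h) - z s))\<^sup>2 + (eps (s + h) - eps s) * G)
      + 2 * ((z (s + h) - z s) \<bullet> (velocity (s + h) - velocity s))
      + (eps' (s + h) - eps' s) * G + (eps (s + h) - eps s) * ((norm (z (s + h)))\<^sup>2 - (norm (z s))\<^sup>2)"
  have "((\<lambda>s. s + h) has_vector_derivative 1) (at s)"
    using has_vector_derivative_add[OF has_vector_derivative_id has_vector_derivative_const] by simp
  then have "((\<lambda>s. z (s + h)) has_vector_derivative velocity (s + h)) (at s)"
    using vector_diff_chain_at[of "\<lambda>s. s + h" 1 s z "velocity (s + h)"] z_has_vector_derivative[OF assms(2)]
    by (simp add: o_def)
  then have "((\<lambda>s. z (s + h) - z s) has_vector_derivative velocity (s + h) - velocity s) (at s)"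
    using z_has_vector_derivative[OF assms(1)] by (rule has_vector_derivative_diff)
  then have dN: "((\<lambda>s. (norm (z (s + h) - z s))\<^sup>2) has_real_derivative
      2 * ((z (s + h) - z s) \<bullet> (velocity (s + h) - velocity s))) (at s)"
    by (rule has_real_derivative_norm_squared)
  have dE: "((\<lambda>s. exp (rho (s + h) + rho s)) has_real_derivative E * (eps (s + h) + eps s)) (at s)"
    unfolding E_def
    using rho_has_real_derivative[OF assms(2), unfolded DERIV_shift] rho_has_real_derivative[OF assms(1)]
    by (auto intro!: derivative_eq_intros)
  have dD: "((\<lambda>s. eps (s + h) - eps s) has_real_derivative eps' (s + h) - eps' s) (at s)"
    using eps_has_real_derivative[OF assms(2), unfolded DERIV_shift] eps_has_real_derivative[OF assms(1)]
    by (rule DERIV_diff)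
  have dG: "((\<lambda>s. energy (s + h) - energy s) has_real_derivative
      (norm (z (s + h)))\<^sup>2 - (norm (z s))\<^sup>2) (at s)"
    using energy_has_real_derivative[OF assms(2), unfolded DERIV_shift] energy_has_real_derivative[OF assms(1)]
    by (rule DERIV_diff)
  have "(increment_functional h has_real_derivative E * L) (at s)"
    unfolding increment_functional_def[abs_def]
    by (rule DERIV_mult[OF dE DERIV_add[OF dN DERIV_mult[OF dD dG]], THEN DERIV_cong])
       (simp add: E_def L_def G_def algebra_simps)
  moreover have "L = G * ((eps (s + h))\<^sup>2 + eps' (s + h) - ((eps s)\<^sup>2 + eps' s))
      - 2 * ((T (z (s + h)) - T (z s)) \<bullet> (z (s + h) - z s))"
    unfolding L_def velocity_def by (rule regularized_increment_identity)
  ultimately show ?thesis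
    unfolding E_def G_def by simp
qed

lemma increment_functional_antimono:
  assumes "t0 \<le> tp"
    and eps_antimono: "\<And>u v. tp < u \<Longrightarrow> u \<le> v \<Longrightarrow> (eps v)\<^sup>2 + eps' v \<le> (eps u)\<^sup>2 + eps' u"
    and "0 < h" "tp < u" "u \<le> v"
  shows "increment_functional h v \<le> increment_functional h u"
proof (rule DERIV_nonpos_imp_antimono_greaterThan[OF _ \<open>tp < u\<close> \<open>u \<le> v\<close>])
  fix s
  assume "tp < s"
  then have s: "t0 < s" "t0 < s + h"
    using assms by auto
  have "(energy (s + h) - energy s) * ((eps (s + h))\<^sup>2 + eps' (s + h) - ((eps s)\<^sup>2 + eps' s)) \<le> 0"
      (is "?G \<le> 0")
    using eps_antimono[OF \<open>tp < s\<close>, of "s + h"] energy_mono[OF s(1), of "s + h"] \<open>0 < h\<close>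
    by (intro mult_nonneg_nonpos) auto
  moreover have "0 \<le> (T (z (s + h)) - T (z s)) \<bullet> (z (s + h) - z s)" (is "0 \<le> ?M")
    using T_monotone unfolding monotone_operator_def by blast
  ultimately have "exp (rho (s + h) + rho s) * (?G - 2 * ?M) \<le> 0"
    by (intro mult_nonneg_nonpos) auto
  then show "\<exists>D. (increment_functional h has_real_derivative D) (at s) \<and> D \<le> 0"
    using increment_functional_has_real_derivative[OF s] by blast
qed

lemma increment_functional_tendsto_lyapunov:
  assumes "t0 < t"
  shows "((\<lambda>h. increment_functional h t / h\<^sup>2) \<longlongrightarrow> lyapunov t) (at 0)"
proof -
  have "((\<lambda>h. rho (t + h)) \<longlongrightarrow> rho t) (at 0)"
    using DERIV_isCont[OF rho_has_real_derivative[OF assms]] by (simp add: isCont_def LIM_offset_zero)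
  then have "((\<lambda>h. exp (rho (t + h) + rho t) * ((norm ((z (t + h) - z t) /\<^sub>R h))\<^sup>2
      + (eps (t + h) - eps t) / h * ((energy (t + h) - energy t) / h))) \<longlongrightarrow> lyapunov t) (at 0)"
    unfolding lyapunov_def mult_2
    using has_vector_derivative_difference_quotient[OF z_has_vector_derivative[OF assms]]
      eps_has_real_derivative[OF assms] energy_has_real_derivative[OF assms]
    by (intro tendsto_intros) (auto simp: DERIV_def)
  moreover have "\<forall>\<^sub>F h in at 0. exp (rho (t + h) + rho t) * ((norm ((z (t + h) - z t) /\<^sub>R h))\<^sup>2
      + (eps (t + h) - eps t) / h * ((energy (t + h) - energy t) / h)) = increment_functional h t / h\<^sup>2"
    unfolding eventually_at_filter
  proof (intro always_eventually allI impI)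
    fix h :: real
    assume "h \<noteq> 0"
    have "(norm ((z (t + h) - z t) /\<^sub>R h))\<^sup>2 = (norm (z (t + h) - z t))\<^sup>2 / h\<^sup>2"
      by (simp only: norm_scaleR power_mult_distrib power2_abs) (simp add: divide_inverse power_inverse)
    then show "exp (rho (t + h) + rho t) * ((norm ((z (t + h) - z t) /\<^sub>R h))\<^sup>2
        + (eps (t + h) - eps t) / h * ((energy (t + h) - energy t) / h)) = increment_functional h t / h\<^sup>2"
      unfolding increment_functional_def using \<open>h \<noteq> 0\<close> by (simp add: field_simps power2_eq_square)
  qed
  ultimately show ?thesis
    by (rule Lim_transform_eventually)
qed

lemma lyapunov_antimono:
  assumes "t0 \<le> tp"
    and eps_antimono: "\<And>u v. tp < u \<Longrightarrow> u \<le> v \<Longrightarrow> (eps v)\<^sup>2 + eps' v \<le> (eps u)\<^sup>2 + eps' u"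
    and "tp < u" "u \<le> v"
  shows "lyapunov v \<le> lyapunov u"
proof -
  have lim: "((\<lambda>h. increment_functional h w / h\<^sup>2) \<longlongrightarrow> lyapunov w) (at_right 0)" if "tp < w" for w
    using increment_functional_tendsto_lyapunov[of w] that \<open>t0 \<le> tp\<close>
    by (auto intro: tendsto_mono[OF at_le])
  have "\<forall>\<^sub>F h in at_right 0. increment_functional h v / h\<^sup>2 \<le> increment_functional h u / h\<^sup>2"
    using eventually_at_right_less[of 0]
  proof eventually_elim
    case (elim h)
    then show ?case
      using increment_functional_antimono[OF assms(1,2) _ assms(3,4)] by (simp add: divide_right_mono)
  qed
  moreover have "tp < v"
    using assms by linarith
  ultimately show ?thesis
    using lim[OF \<open>tp < u\<close>] lim[of v] by (intro tendsto_le[of "at_right 0"]) auto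
qed

lemma velocity_bound:
  assumes "0 \<le> (eps t)\<^sup>2 + eps' t"
  shows "(norm (velocity t))\<^sup>2 \<le> lyapunov t * exp (-2 * rho t) + (eps t)\<^sup>2 * (norm (z t))\<^sup>2"
proof -
  have "lyapunov t * exp (-2 * rho t) = (norm (velocity t))\<^sup>2 + eps' t * (norm (z t))\<^sup>2"
    unfolding lyapunov_def by (simp add: exp_minus field_simps)
  moreover have "- eps' t * (norm (z t))\<^sup>2 \<le> (eps t)\<^sup>2 * (norm (z t))\<^sup>2"
    using assms by (intro mult_right_mono) auto
  ultimately show ?thesis
    by simp
qed

lemma distance_to_regularized_zero_le:
  assumes "t0 \<le> tp"
    and eps_antimono: "\<And>u v. tp < u \<Longrightarrow> u \<le> v \<Longrightarrow> (eps v)\<^sup>2 + eps' v \<le> (eps u)\<^sup>2 + eps' u"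
    and eps_bound: "0 \<le> (eps t)\<^sup>2 + eps' t"
    and "T w = 0" and zero: "T y + eps t *\<^sub>R y = 0"
    and "0 < \<alpha>" and strong: "\<And>u v. \<alpha> * (norm (u - v))\<^sup>2 \<le> (norm (T u - T v))\<^sup>2"
    and "tp < t1" "t1 \<le> t" "eps t \<le> sqrt \<alpha> / 4"
  shows "(norm (z t - y))\<^sup>2
    \<le> 8 / (sqrt \<alpha>)\<^sup>2 * max (max 0 (lyapunov t1)) ((norm w)\<^sup>2) * (exp (-2 * rho t) + (eps t)\<^sup>2)"
proof (rule error_bound_from_velocity_bound)
  have "t0 \<le> t"
    using assms by linarith
  then show "0 \<le> eps t"
    using eps_pos less_imp_le by blast
  have "lyapunov t * exp (-2 * rho t) \<le> max 0 (lyapunov t1) * exp (-2 * rho t)"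
    using lyapunov_antimono[OF \<open>t0 \<le> tp\<close> eps_antimono \<open>tp < t1\<close> \<open>t1 \<le> t\<close>] by (intro mult_right_mono) auto
  then show "(norm (velocity t))\<^sup>2 \<le> max 0 (lyapunov t1) * exp (-2 * rho t) + (eps t)\<^sup>2 * (norm (z t))\<^sup>2"
    using velocity_bound[OF eps_bound] by linarith
  show "sqrt \<alpha> * norm (z t - y) \<le> norm (velocity t) + eps t * norm (z t - y)"
    using strongly_monotone_regularized_zero_dist[OF strong _ zero \<open>0 \<le> eps t\<close>] \<open>0 < \<alpha>\<close>
    by (simp only: velocity_def norm_minus_cancel less_imp_le)
  show "norm (z t) \<le> norm w + norm (z t - y)"
    using monotone_operator_regularized_zero_norm_le[OF T_monotone \<open>T w = 0\<close> zero] eps_pos[OF \<open>t0 \<le> t\<close>]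
      norm_triangle_sub[of "z t" y] by auto
qed (use assms in auto)

theorem distance_to_regularized_zeros_bigo:
  assumes "t0 \<le> tp"
    and eps_antimono: "\<And>u v. tp < u \<Longrightarrow> u \<le> v \<Longrightarrow> (eps v)\<^sup>2 + eps' v \<le> (eps u)\<^sup>2 + eps' u"
    and eps_bound: "\<And>t. tp \<le> t \<Longrightarrow> 0 \<le> (eps t)\<^sup>2 + eps' t"
    and "(eps \<longlongrightarrow> 0) at_top"
    and "T w = 0"
    and zeros: "\<And>t. t0 \<le> t \<Longrightarrow> T (zt t) + eps t *\<^sub>R zt t = 0"
    and "0 < \<alpha>" and strong: "\<And>u v. \<alpha> * (norm (u - v))\<^sup>2 \<le> (norm (T u - T v))\<^sup>2"
  shows "(\<lambda>t. (norm (z t - zt t))\<^sup>2) \<in> O[at_top](\<lambda>t. exp (-2 * rho t) + (eps t)\<^sup>2)"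
proof (rule bigoI)
  have "\<forall>\<^sub>F t in at_top. eps t < sqrt \<alpha> / 4"
    using order_tendstoD(2)[OF \<open>(eps \<longlongrightarrow> 0) at_top\<close>, of "sqrt \<alpha> / 4"] \<open>0 < \<alpha>\<close> by simp
  then show "\<forall>\<^sub>F t in at_top. norm ((norm (z t - zt t))\<^sup>2)
      \<le> 8 / (sqrt \<alpha>)\<^sup>2 * max (max 0 (lyapunov (tp + 1))) ((norm w)\<^sup>2) * norm (exp (-2 * rho t) + (eps t)\<^sup>2)"
    using eventually_ge_at_top[of "tp + 1"]
  proof eventually_elim
    case (elim t)
    then show ?case
      using distance_to_regularized_zero_le[OF assms(1-3) \<open>T w = 0\<close> zeros \<open>0 < \<alpha>\<close> strong, of t "tp + 1"] assms(1)
      by simp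
  qed
qed

end

theorem corollary4p7:
  fixes f :: "'a::{real_inner,complete_space} \<Rightarrow> real"
    and gf :: "'a \<Rightarrow> 'a"
    and A :: "'a \<Rightarrow> 'b::{real_inner,complete_space}"
    and Astar :: "'b \<Rightarrow> 'a"
    and b :: 'b
    and eps eps' eps'' :: "real \<Rightarrow> real"
    and t0 tp :: real
    and x xt :: "real \<Rightarrow> 'a"
    and lam lamt :: "real \<Rightarrow> 'b"
  assumes f_convex: "convex_on UNIV f"
    and f_grad: "\<And>z. (f has_derivative (\<lambda>h. gf z \<bullet> h)) (at z)"
    and gf_cont: "continuous_on UNIV gf"
    and gf_lip: "\<And>B. bounded B \<Longrightarrow> \<exists>L. \<forall>u\<in>B. \<forall>v\<in>B. norm (gf u - gf v) \<le> L * norm (u - v)"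
    and A_lin: "bounded_linear A"
    and A_adj: "\<And>u v. A u \<bullet> v = u \<bullet> Astar v"
    and t0_nonneg: "t0 \<ge> 0"
    and eps_pos: "\<And>t. t \<ge> t0 \<Longrightarrow> eps t > 0"
    and eps_d1: "\<And>t. t \<ge> t0 \<Longrightarrow> (eps has_real_derivative eps' t) (at t within {t0..})"
    and eps_d2: "\<And>t. t \<ge> t0 \<Longrightarrow> (eps' has_real_derivative eps'' t) (at t within {t0..})"
    and eps''_cont: "continuous_on {t0..} eps''"
    and eps_lim: "(eps \<longlongrightarrow> 0) at_top"
    and SM_nonempty: "opt_sol f A b \<times> lagrange_mult f gf A Astar b \<noteq> {}"
    and sol_x: "\<And>t. t \<ge> t0 \<Longrightarrow>
        (x has_vector_derivative (- (gf (x t) + Astar (lam t) + eps t *\<^sub>R x t))) (at t within {t0..})"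
    and sol_lam: "\<And>t. t \<ge> t0 \<Longrightarrow>
        (lam has_vector_derivative (- (b - A (x t) + eps t *\<^sub>R lam t))) (at t within {t0..})"
    and zero_Tt: "\<And>t. t \<ge> t0 \<Longrightarrow>
        opT gf A Astar b (xt t, lamt t) + eps t *\<^sub>R (xt t, lamt t) = 0"
    and tp_ge: "tp \<ge> t0"
    and eps_cond1: "\<And>t. t \<ge> tp \<Longrightarrow> (eps t)\<^sup>2 + eps' t \<ge> 0"
    and eps_cond2: "\<And>t. t \<ge> tp \<Longrightarrow> 2 * eps t * eps' t + eps'' t \<le> 0"
    and T_strong: "\<exists>\<alpha>>0. \<forall>z w. (norm (opT gf A Astar b z - opT gf A Astar b w))\<^sup>2
                                   \<ge> \<alpha> * (norm (z - w))\<^sup>2"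
  shows "(\<lambda>t. (norm ((x t, lam t) - (xt t, lamt t)))\<^sup>2)
           \<in> O[at_top](\<lambda>t. exp (-2 * integral {t0..t} eps) + (eps t)\<^sup>2)"
proof -
  let ?T = "opT gf A Astar b"
  have "monotone_operator ?T"
    using monotone_operator_opT convex_on_gradient_monotone[OF f_convex f_grad]
      bounded_linear.linear[OF A_lin] A_adj by blast
  then interpret regularized_monotone_flow ?T eps eps' t0 "\<lambda>t. (x t, lam t)"
    using eps_pos eps_d1 has_vector_derivative_Pair[OF sol_x sol_lam]
    by unfold_locales (simp_all add: opT_def)
  have "(eps' has_real_derivative eps'' s) (at s)" if "t0 < s" for s
    using eps_d2[of s] that by (simp add: at_within_atLeast)
  then have "(eps v)\<^sup>2 + eps' v \<le> (eps u)\<^sup>2 + eps' u" if "tp < u" "u \<le> v" for u v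
    using square_plus_derivative_antimono[of tp eps eps' eps'' u v] eps_has_real_derivative eps_cond2 tp_ge that
    by force
  moreover obtain w where "?T w = 0"
    using opT_has_zero[OF SM_nonempty] .
  moreover obtain \<alpha> where "0 < \<alpha>" "\<And>u v. \<alpha> * (norm (u - v))\<^sup>2 \<le> (norm (?T u - ?T v))\<^sup>2"
    using T_strong by blast
  ultimately show ?thesis
    using distance_to_regularized_zeros_bigo[OF tp_ge _ eps_cond1 eps_lim _ zero_Tt, of w \<alpha>]
    unfolding rho_def by auto
qed

end
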